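(* Let $f,g,\ell$ be nonnegative integers, $\mathcal{F}\in\mathbb{R}^{\alpha_1\times\cdots\times\alpha_{f+\ell}}$, $\mathcal{G}\in\mathbb{R}^{\beta_1\times\cdots\times\beta_{g+\ell}}$, $\mathbf{p},\mathbf{q}$ permutations of $1:f+\ell$ and $1:g+\ell$, and $\mathbf{r}=\mathbf{p}(1:f)$, $\boldsymbol{\lambda}=\mathbf{p}(f+1:f+\ell)$, $\boldsymbol{\psi}=\mathbf{q}(1:\ell)$, $\mathbf{c}=\mathbf{q}(\ell+1:\ell+g)$, with $\boldsymbol{\alpha}(\boldsymbol{\lambda})=\boldsymbol{\beta}(\boldsymbol{\psi})$. Let $\mathcal{H}\in\mathbb{R}^{\alpha_{r_1}\times\cdots\times\alpha_{r_f}\times\beta_{c_1}\times\cdots\times\beta_{c_g}}$ be given by $\mathcal{H}(\mathbf{i},\mathbf{j})=\sum_{\mathbf{k}=\mathbf{1}}^{\boldsymbol{\alpha}(\boldsymbol{\lambda})}\mathcal{F}^{<\mathbf{p}>}(\mathbf{i},\mathbf{k})\,\mathcal{G}^{<\mathbf{q}>}(\mathbf{k},\mathbf{j})$ for $\mathbf{1}\le\mathbf{i}\le\boldsymbol{\alpha}(\mathbf{r})$, $\mathbf{1}\le\mathbf{j}\le\boldsymbol{\beta}(\mathbf{c})$. Let $\mathbf{S}=\{\mathbf{s}^{(1)},\ldots,\mathbf{s}^{(f+\ell)}\}$ be a blocking of $\mathcal{F}$ and set $\mathbf{R}=\{\mathbf{s}^{(r_1)},\ldots,\mathbf{s}^{(r_f)}\}$,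 $\boldsymbol{\Lambda}=\{\mathbf{s}^{(\lambda_1)},\ldots,\mathbf{s}^{(\lambda_\ell)}\}$. Let $\mathbf{T}=\{\mathbf{t}^{(1)},\ldots,\mathbf{t}^{(g+\ell)}\}$ be a blocking of $\mathcal{G}$ and set $\boldsymbol{\Psi}=\{\mathbf{t}^{(\psi_1)},\ldots,\mathbf{t}^{(\psi_\ell)}\}$, $\mathbf{C}=\{\mathbf{t}^{(c_1)},\ldots,\mathbf{t}^{(c_g)}\}$. If $\mathbf{s}^{(\lambda_k)}=\mathbf{t}^{(\psi_k)}$ for $k=1,\ldots,\ell$, then, regarding $\mathcal{H}$ as blocked by $\mathbf{R}$ in modes $1$ through $f$ and by $\mathbf{C}$ in modes $f+1$ through $f+g$ (so that $\mathbf{R}$ is a blocking for modes $1,\ldots,f$ of $\mathcal{H}$ and $\mathbf{C}$ a blocking for modes $f+1,\ldots,f+g$), \[ \mathcal{H}_{\mathbf{R}\times\mathbf{C}}=\mathcal{F}_{\mathbf{R}\times\boldsymbol{\Lambda}}\cdot\mathcal{G}_{\boldsymbol{\Psi}\times\mathbf{C}}, \] where $\mathcal{F}_{\mathbf{R}\times\boldsymbol{\Lambda}}=P_{\mathbf{R}}\mathcal{F}_{\mathbf{r}\times\boldsymbol{\lambda}}P_{\boldsymbol{\Lambda}}^T$, $\mathcal{G}_{\boldsymbol{\Psi}\times\mathbf{C}}=P_{\boldsymbol{\Psi}}\mathcal{G}_{\boldsymbol{\psi}\times\mathbf{c}}P_{\mathbf{C}}^T$, and $\mathcal{H}_{\m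athbf{R}\times\mathbf{C}}=P_{\mathbf{R}}\mathcal{H}_{[1:f]\times[f+1:f+g]}P_{\mathbf{C}}^T$.
   Context: For an integer vector $\mathbf{v}$ and index vector $\mathbf{s}$, $\mathbf{v}(\mathbf{s})=(v_{s_1},v_{s_2},\ldots)$; index inequalities are componentwise; $\sum_{\mathbf{k}=\mathbf{1}}^{\mathbf{n}}$ is the nested sum over all $\mathbf{1}\le\mathbf{k}\le\mathbf{n}$. $\mathrm{ivec}(\mathbf{i},\mathbf{n})=i_1+(i_2-1)n_1+\cdots+(i_d-1)n_1\cdots n_{d-1}$; $\mathrm{vec}(\mathcal{X})$ has entry $\mathrm{ivec}(\mathbf{i},\mathbf{n})$ equal to $\mathcal{X}(\mathbf{i})$. The $\mathbf{p}$-transpose is $\mathcal{X}^{<\mathbf{p}>}(i_{p_1},\ldots,i_{p_d})=\mathcal{X}(i_1,\ldots,i_d)$. For $\mathbf{r}=\mathbf{p}(1:e)$, $\mathbf{c}=\mathbf{p}(e+1:d)$ ($0\le e\le d$), the unfolding $\mathcal{X}_{\mathbf{r}\times\mathbf{c}}$ is the matrix with $(\alpha,\beta)$ entry $\mathcal{X}^{<\mathbf{p}>}(i_1,\ldots,i_e,j_1,\ldots,j_{d-e})$, $\alpha=\mathrm{ivec}(\mathbf{i},\mathbf{n}(\mathbf{r}))$, $\beta=\mathrm{ivec}(\mathbf{j},\mathbf{n}(\mathbf{c}))$ (a column vector $\mathrm{vec}(\mathcal{X}^{<\mathbf{p}>})$ if $\mathbf{c}=\emptyset$, a row vector $\mathrm{vec}(\mathcal{X}^{<\mathbf{p}>})^T$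 if $\mathbf{r}=\emptyset$). A blocking of a tensor in $\mathbb{R}^{n_1\times\cdots\times n_d}$ is a collection $\{\mathbf{m}^{(1)},\ldots,\mathbf{m}^{(d)}\}$, each $\mathbf{m}^{(k)}=[m^{(k)}_1,\ldots,m^{(k)}_{b_k}]$ a vector of positive integers summing to $n_k$; block $\mathbf{i}$ ($\mathbf{1}\le\mathbf{i}\le\mathbf{b}$) is the subtensor with index ranges $m^{(k)}_1+\cdots+m^{(k)}_{i_k-1}+1:m^{(k)}_1+\cdots+m^{(k)}_{i_k}$ in mode $k$; $\mathrm{vec}_{\mathbf{M}}(\mathcal{X})$ stacks the vecs of the blocks in order of increasing $\mathrm{ivec}(\mathbf{i},\mathbf{b})$. For a blocking $\mathbf{K}$ of tensors of some size $\mathbf{n}$, $P_{\mathbf{K}}$ denotes the unique permutation matrix with $P_{\mathbf{K}}\mathrm{vec}(\mathcal{X})=\mathrm{vec}_{\mathbf{K}}(\mathcal{X})$ for all tensors $\mathcal{X}$ of size $\mathbf{n}$; here $P_{\mathbf{R}}$, $P_{\boldsymbol{\Lambda}}$, $P_{\boldsymbol{\Psi}}$, $P_{\mathbf{C}}$ refer to tensors of sizes $\boldsymbol{\alpha}(\mathbf{r})$, $\boldsymbol{\alpha}(\boldsymbol{\lambda})$, $\boldsymbol{\beta}(\boldsymbol{\psi})$, $\boldsymbol{\beta}(\mathbf{c})$ respectively. *)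

theory Defs
  imports "HOL-Combinatorics.Permutations" "Jordan_Normal_Form.Matrix"
begin

(* Tensors of order d and size n = [n_1,...,n_d] are functions on (1-based) index lists;
   only entries at valid indices (idx_set n) are meaningful. *)
type_synonym tensor = "nat list \<Rightarrow> real"

definition idx_set :: "nat list \<Rightarrow> nat list set" where
  "idx_set n = {i. length i = length n \<and> (\<forall>k<length n. 1 \<le> i!k \<and> i!k \<le> n!k)}"

definition ivec :: "nat list \<Rightarrow> nat list \<Rightarrow> nat" where
  "ivec i n = 1 + (\<Sum>k<length i. (i!k - 1) * prod_list (take k n))"

definition univec :: "nat \<Rightarrow> nat list \<Rightarrow> nat list" where
  "univec a n = (THE i. i \<in> idx_set n \<and> ivec i n = a)"

definition sel :: "'a list \<Rightarrow> nat list \<Rightarrow> 'a list" where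
  "sel v s = map (\<lambda>k. v ! (k - 1)) s"

(* vec(X) for X of size n: entry ivec(i,n) (1-based; JNF vectors are 0-based) is X(i) *)
definition tvec :: "tensor \<Rightarrow> nat list \<Rightarrow> real vec" where
  "tvec X n = vec (prod_list n) (\<lambda>a. X (univec (a + 1) n))"

(* p-transpose: X^<p>(i_{p_1},...,i_{p_d}) = X(i_1,...,i_d) *)
definition ptrans :: "tensor \<Rightarrow> nat list \<Rightarrow> tensor" where
  "ptrans X p j = X (THE i. length i = length p \<and> map (\<lambda>k. i ! (k - 1)) p = j)"

definition is_perm :: "nat list \<Rightarrow> nat \<Rightarrow> bool" where
  "is_perm p d \<longleftrightarrow> distinct p \<and> set p = {1..d}"

definition tunfold :: "tensor \<Rightarrow> nat list \<Rightarrow> nat list \<Rightarrow> nat list \<Rightarrow> real mat" where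
  "tunfold X n r c = mat (prod_list (sel n r)) (prod_list (sel n c))
     (\<lambda>(a, b). ptrans X (r @ c) (univec (a + 1) (sel n r) @ univec (b + 1) (sel n c)))"

definition blocking :: "nat list list \<Rightarrow> nat list \<Rightarrow> bool" where
  "blocking M n \<longleftrightarrow> length M = length n \<and>
     (\<forall>k<length n. (\<forall>x\<in>set (M!k). 0 < x) \<and> sum_list (M!k) = n!k)"

definition block_size :: "nat list list \<Rightarrow> nat list \<Rightarrow> nat list" where
  "block_size M i = map (\<lambda>k. M!k ! (i!k - 1)) [0..<length M]"

definition block :: "tensor \<Rightarrow> nat list list \<Rightarrow> nat list \<Rightarrow> tensor" where
  "block X M i = (\<lambda>j. X (map (\<lambda>k. sum_list (take (i!k - 1) (M!k)) + j!k) [0..<length M]))"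

definition tvec_blk :: "tensor \<Rightarrow> nat list list \<Rightarrow> real vec" where
  "tvec_blk X M = vec_of_list (concat (map (\<lambda>a.
      list_of_vec (tvec (block X M (univec a (map length M)))
                         (block_size M (univec a (map length M)))))
      [1..<prod_list (map length M) + 1]))"

definition perm_mat :: "real mat \<Rightarrow> nat \<Rightarrow> bool" where
  "perm_mat P N \<longleftrightarrow> (\<exists>\<sigma>. \<sigma> permutes {..<N} \<and>
      P = mat N N (\<lambda>(a, b). if b = \<sigma> a then 1 else 0))"

definition Pmat :: "nat list \<Rightarrow> nat list list \<Rightarrow> real mat" where
  "Pmat n K = (THE P. perm_mat P (prod_list n) \<and> (\<forall>X. P *\<^sub>v tvec X n = tvec_blk X K))"

definition blk_unfolding ::
  "tensor \<Rightarrow> nat list \<Rightarrow> nat list list \<Rightarrow> nat list \<Rightarrow> nat list \<Rightarrow> real mat" where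
  "blk_unfolding X n S r c =
     Pmat (sel n r) (sel S r) * tunfold X n r c * transpose_mat (Pmat (sel n c) (sel S c))"

end

theory Submission
  imports Defs
begin

text \<open>
  The contraction defining H is, entry by entry, the matrix product of the unfoldings
  of F over r \<times> \<lambda> and of G over \<psi> \<times> c, because ivec enumerates the contracted
  multi-indices bijectively. Each blocked-order matrix P_K is a genuine permutation matrix:
  within one mode a blocking cuts 1..n_k into consecutive segments, so pairs (segment, offset)
  correspond bijectively to indices, and the blockwise order lists every multi-index exactly
  once. Hence P_K is orthogonal, and since \<Lambda> and \<Psi> are the same blocking, inserting
  P_\<Lambda>^T P_\<Lambda> = I between the two factors of P_R F G P_C^T gives the claim.
\<close>

section \<open>Multi-indices and their linear position\<close>

lemma idx_set_Nil [simp]: "idx_set [] = {[]}"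
  by (auto simp: idx_set_def)

lemma idx_set_Cons: "idx_set (m # n) = {x # i | x i. 1 \<le> x \<and> x \<le> m \<and> i \<in> idx_set n}"
proof -
  have "j \<in> idx_set (m # n) \<longleftrightarrow> (\<exists>x i. j = x # i \<and> 1 \<le> x \<and> x \<le> m \<and> i \<in> idx_set n)" for j
    by (cases j) (auto simp: idx_set_def nth_Cons split: nat.splits)
  then show ?thesis by blast
qed

lemma bij_betw_Cons_idx_set: "bij_betw (\<lambda>(x, i). x # i) ({1..m} \<times> idx_set n) (idx_set (m # n))"
  by (rule bij_betw_byWitness[where f' = "\<lambda>j. (hd j, tl j)"]) (auto simp: idx_set_Cons)

lemma ivec_Cons: "1 \<le> x \<Longrightarrow> ivec (x # i) (m # n) = x + m * (ivec i n - 1)"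
proof -
  assume x: "1 \<le> x"
  have "ivec (x # i) (m # n) = 1 + ((x - 1) + (\<Sum>k<length i. (i!k - 1) * (m * prod_list (take k n))))"
    unfolding ivec_def length_Cons sum.lessThan_Suc_shift by simp
  also have "\<dots> = x + m * (\<Sum>k<length i. (i!k - 1) * prod_list (take k n))"
    using x by (simp add: sum_distrib_left mult.left_commute)
  finally show ?thesis by (simp add: ivec_def)
qed

lemma bij_betw_mixed_radix:
  "bij_betw (\<lambda>(x, a). x + m * (a - 1)) ({1..m} \<times> {1..N}) {1..m * (N::nat)}"
proof -
  have upper: "x + m * (a - 1) \<le> m * N" if "x \<le> m" "1 \<le> a" "a \<le> N" for x a
  proof -
    have "x + m * (a - 1) \<le> m + m * (a - 1)" using that by simp
    also have "\<dots> = m * a" using that by (cases a) auto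
    also have "\<dots> \<le> m * N" using that by simp
    finally show ?thesis .
  qed
  have digits: "(x + m * (a - 1) - 1) mod m = x - 1 \<and> (x + m * (a - 1) - 1) div m = a - 1"
    if "1 \<le> x" "x \<le> m" for x a
  proof -
    have shift: "x + m * (a - 1) - 1 = (x - 1) + m * (a - 1)" using that by simp
    have "x - 1 < m" using that by simp
    then show ?thesis unfolding shift by simp
  qed
  have range: "0 < m \<and> z - 1 < m * N" if "z \<in> {1..m * N}" for z
    using that by (auto intro: ccontr)
  show ?thesis
    by (rule bij_betw_byWitness[where f' = "\<lambda>z. ((z - 1) mod m + 1, (z - 1) div m + 1)"])
      (use upper digits range in \<open>auto simp: mod_mult_div_eq Suc_le_eq div_less_iff_less_mult mult.commute\<close>)
qed

lemma bij_betw_ivec: "bij_betw (\<lambda>i. ivec i n) (idx_set n) {1..prod_list n}"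
proof (induction n)
  case Nil
  show ?case by (simp add: ivec_def bij_betw_def)
next
  case (Cons m n)
  have "bij_betw ((\<lambda>(x, a). x + m * (a - 1)) \<circ> map_prod id (\<lambda>i. ivec i n))
      ({1..m} \<times> idx_set n) {1..prod_list (m # n)}"
    using bij_betw_trans[OF bij_betw_map_prod[OF bij_betw_id Cons.IH] bij_betw_mixed_radix]
    by simp
  then have "bij_betw ((\<lambda>i. ivec i (m # n)) \<circ> (\<lambda>(x, i). x # i))
      ({1..m} \<times> idx_set n) {1..prod_list (m # n)}"
    by (rule bij_betw_cong[THEN iffD1, rotated]) (auto simp: ivec_Cons)
  then show ?case
    using bij_betw_comp_iff[OF bij_betw_Cons_idx_set] by blast
qed

lemma card_idx_set: "card (idx_set n) = prod_list n"
  using bij_betw_same_card[OF bij_betw_ivec] by simp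

lemma univec_ivec: "i \<in> idx_set n \<Longrightarrow> univec (ivec i n) n = i"
  unfolding univec_def
  by (rule the_equality) (use bij_betw_ivec[of n] in \<open>auto simp: bij_betw_def dest: inj_onD\<close>)

lemma
  assumes "a \<in> {1..prod_list n}"
  shows univec_in_idx_set: "univec a n \<in> idx_set n"
    and ivec_univec: "ivec (univec a n) n = a"
proof -
  obtain i where "i \<in> idx_set n" "a = ivec i n"
    using assms bij_betw_imp_surj_on[OF bij_betw_ivec] by blast
  then show "univec a n \<in> idx_set n" "ivec (univec a n) n = a"
    by (simp_all add: univec_ivec)
qed

lemma bij_betw_univec: "bij_betw (\<lambda>t. univec (t + 1) n) {..<prod_list n} (idx_set n)"
proof (rule bij_betw_byWitness[where f' = "\<lambda>i. ivec i n - 1"])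
  have "ivec i n \<in> {1..prod_list n}" if "i \<in> idx_set n" for i
    using bij_betw_apply[OF bij_betw_ivec that] .
  then show "\<forall>i \<in> idx_set n. univec (ivec i n - 1 + 1) n = i"
    and "(\<lambda>i. ivec i n - 1) ` idx_set n \<subseteq> {..<prod_list n}"
    by (force simp: univec_ivec)+
qed (auto simp: ivec_univec univec_in_idx_set)

definition idx_list :: "nat list \<Rightarrow> nat list list" where
  "idx_list n = map (\<lambda>a. univec a n) [1..<prod_list n + 1]"

lemma distinct_idx_list: "distinct (idx_list n)"
  unfolding idx_list_def distinct_map
  by (auto intro!: inj_onI dest: arg_cong[where f = "\<lambda>i. ivec i n"] simp: ivec_univec)

lemma set_idx_list: "set (idx_list n) = idx_set n"
proof -
  have range: "set [1..<prod_list n + 1] = (\<lambda>i. ivec i n) ` idx_set n"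
    using bij_betw_imp_surj_on[OF bij_betw_ivec] by auto
  show ?thesis
    unfolding idx_list_def set_map range image_image by (simp add: univec_ivec cong: image_cong)
qed

lemma list_of_tvec: "list_of_vec (tvec X n) = map X (idx_list n)"
  by (simp add: tvec_def idx_list_def map_Suc_upt[symmetric] del: upt_Suc)

lemma tvec_of_vec: "dim_vec v = prod_list n \<Longrightarrow> tvec (\<lambda>j. v $ (ivec j n - 1)) n = v"
  unfolding tvec_def by (rule eq_vecI) (simp_all add: ivec_univec)

section \<open>Blockings\<close>

lemma sum_list_take_mono: "a \<le> b \<Longrightarrow> sum_list (take a m) \<le> sum_list (take b (m :: nat list))"
proof -
  assume "a \<le> b"
  then have "take b m = take a m @ take (b - a) (drop a m)"
    by (metis le_add_diff_inverse take_add)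
  then show ?thesis by simp
qed

definition segments :: "nat list \<Rightarrow> (nat \<times> nat) set" where
  "segments m = (SIGMA x:{1..length m}. {1..m ! (x - 1)})"

definition segment_pos :: "nat list \<Rightarrow> nat \<times> nat \<Rightarrow> nat" where
  "segment_pos m = (\<lambda>(x, y). sum_list (take (x - 1) m) + y)"

lemma segment_pos_le:
  assumes "(x, y) \<in> segments m"
  shows "segment_pos m (x, y) \<le> sum_list (take x m)"
proof -
  have "x - 1 < length m" "Suc (x - 1) = x" "y \<le> m ! (x - 1)"
    using assms by (auto simp: segments_def)
  then show ?thesis
    using take_Suc_conv_app_nth[of "x - 1" m] by (simp add: segment_pos_def)
qed

lemma segment_pos_less:
  assumes "(x, y) \<in> segments m" and "(x', y') \<in> segments m" and "x < x'"
  shows "segment_pos m (x, y) < segment_pos m (x', y')"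
proof -
  have "segment_pos m (x, y) \<le> sum_list (take x m)"
    using assms(1) by (rule segment_pos_le)
  also have "\<dots> \<le> sum_list (take (x' - 1) m)"
    using assms(3) by (intro sum_list_take_mono) simp
  finally show ?thesis
    using assms(2) by (simp add: segments_def segment_pos_def)
qed

lemma inj_on_segment_pos: "inj_on (segment_pos m) (segments m)"
proof (rule inj_onI)
  fix p q assume p: "p \<in> segments m" and q: "q \<in> segments m"
    and eq: "segment_pos m p = segment_pos m q"
  obtain x y x' y' where pq: "p = (x, y)" "q = (x', y')" by fastforce
  show "p = q"
  proof (cases x x' rule: linorder_cases)
    case less
    then show ?thesis using segment_pos_less[of x y m x' y'] p q eq pq by simp
  next
    case greater
    then show ?thesis using segment_pos_less[of x' y' m x y] p q eq pq by simp
  qed (use eq pq in \<open>simp add: segment_pos_def\<close>)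
qed

lemma segment_pos_surj:
  assumes z: "z \<in> {1..sum_list m}"
  shows "z \<in> segment_pos m ` segments m"
proof -
  define x where "x = (LEAST x. z \<le> sum_list (take x m))"
  have "z \<le> sum_list (take (length m) m)" using z by simp
  then have x: "z \<le> sum_list (take x m)" "x \<le> length m"
    unfolding x_def by (rule LeastI, rule Least_le)
  then have "1 \<le> x" using z by (cases x) auto
  have "\<not> z \<le> sum_list (take (x - 1) m)"
  proof
    assume "z \<le> sum_list (take (x - 1) m)"
    then have "x \<le> x - 1" unfolding x_def by (rule Least_le)
    then show False using \<open>1 \<le> x\<close> by simp
  qed
  moreover have "sum_list (take x m) = sum_list (take (x - 1) m) + m ! (x - 1)"
    using take_Suc_conv_app_nth[of "x - 1" m] \<open>1 \<le> x\<close> x by simp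
  ultimately have mem: "(x, z - sum_list (take (x - 1) m)) \<in> segments m"
    and "z = segment_pos m (x, z - sum_list (take (x - 1) m))"
    using x \<open>1 \<le> x\<close> by (auto simp: segments_def segment_pos_def)
  then show ?thesis by (simp add: rev_image_eqI[OF mem])
qed

lemma bij_betw_segment_pos: "bij_betw (segment_pos m) (segments m) {1..sum_list m}"
proof (rule bij_betw_imageI[OF inj_on_segment_pos])
  have "segment_pos m (x, y) \<in> {1..sum_list m}" if "(x, y) \<in> segments m" for x y
  proof -
    have "segment_pos m (x, y) \<le> sum_list (take x m)"
      using that by (rule segment_pos_le)
    also have "\<dots> \<le> sum_list m"
      using that sum_list_take_mono[of x "length m" m] by (simp add: segments_def)
    finally show ?thesis
      using that by (simp add: segments_def segment_pos_def)
  qed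
  then show "segment_pos m ` segments m = {1..sum_list m}"
    using segment_pos_surj by fastforce
qed

definition block_pos :: "nat list list \<Rightarrow> nat list \<Rightarrow> nat list \<Rightarrow> nat list" where
  "block_pos K i j = map (\<lambda>k. segment_pos (K!k) (i!k, j!k)) [0..<length K]"

definition block_indices :: "nat list list \<Rightarrow> (nat list \<times> nat list) set" where
  "block_indices K = (SIGMA i:idx_set (map length K). idx_set (block_size K i))"

lemma block_eq_comp_block_pos: "block X K i = X \<circ> block_pos K i"
  by (simp add: block_def block_pos_def segment_pos_def fun_eq_iff)

lemma nth_block_pos: "k < length K \<Longrightarrow> block_pos K i j ! k = segment_pos (K!k) (i!k, j!k)"
  by (simp add: block_pos_def)

lemma mem_block_indices_iff:
  "(i, j) \<in> block_indices K \<longleftrightarrow>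
     length i = length K \<and> length j = length K \<and> (\<forall>k<length K. (i!k, j!k) \<in> segments (K!k))"
  by (auto simp: block_indices_def segments_def idx_set_def block_size_def)

lemma inj_on_block_pos: "inj_on (\<lambda>(i, j). block_pos K i j) (block_indices K)"
proof (rule inj_onI)
  fix p q assume "p \<in> block_indices K" "q \<in> block_indices K"
    and "(\<lambda>(i, j). block_pos K i j) p = (\<lambda>(i, j). block_pos K i j) q"
  moreover obtain i j i' j' where pq: "p = (i, j)" "q = (i', j')" by fastforce
  ultimately have B: "(i, j) \<in> block_indices K" "(i', j') \<in> block_indices K"
    and eq: "block_pos K i j = block_pos K i' j'"
    by simp_all
  have "(i!k, j!k) = (i'!k, j'!k)" if "k < length K" for k
  proof (rule inj_onD[OF inj_on_segment_pos])
    show "segment_pos (K!k) (i!k, j!k) = segment_pos (K!k) (i'!k, j'!k)"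
      using eq nth_block_pos[OF that] by metis
    show "(i!k, j!k) \<in> segments (K!k)" "(i'!k, j'!k) \<in> segments (K!k)"
      using B that by (simp_all add: mem_block_indices_iff)
  qed
  with B show "p = q"
    unfolding pq mem_block_indices_iff by (auto intro!: nth_equalityI)
qed

lemma block_pos_in_idx_set:
  assumes "blocking K n" and "(i, j) \<in> block_indices K"
  shows "block_pos K i j \<in> idx_set n"
proof -
  have "block_pos K i j ! k \<in> {1..n!k}" if "k < length K" for k
  proof -
    have "segment_pos (K!k) (i!k, j!k) \<in> {1..sum_list (K!k)}"
      using bij_betw_apply[OF bij_betw_segment_pos] assms(2) that
      by (simp add: mem_block_indices_iff)
    then show ?thesis
      using assms(1) that by (simp add: nth_block_pos blocking_def)
  qed
  then show ?thesis
    using assms(1) by (simp add: idx_set_def block_pos_def blocking_def)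
qed

lemma block_pos_surj:
  assumes "blocking K n" and g: "g \<in> idx_set n"
  shows "g \<in> (\<lambda>(i, j). block_pos K i j) ` block_indices K"
proof -
  have len: "length K = length n"
    using assms by (simp add: blocking_def)
  have seg: "bij_betw (segment_pos (K!k)) (segments (K!k)) {1..n!k}" if "k < length K" for k
    using bij_betw_segment_pos[of "K!k"] assms that by (simp add: blocking_def)
  define pre where "pre k = inv_into (segments (K!k)) (segment_pos (K!k)) (g!k)" for k
  have pre: "pre k \<in> segments (K!k)" "segment_pos (K!k) (pre k) = g!k" if "k < length K" for k
  proof -
    have gk: "g!k \<in> {1..n!k}" using g that len by (simp add: idx_set_def)
    show "pre k \<in> segments (K!k)"
      unfolding pre_def by (rule bij_betw_apply[OF bij_betw_inv_into[OF seg[OF that]] gk])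
    show "segment_pos (K!k) (pre k) = g!k"
      unfolding pre_def by (rule bij_betw_inv_into_right[OF seg[OF that] gk])
  qed
  define i where "i = map (\<lambda>k. fst (pre k)) [0..<length K]"
  define j where "j = map (\<lambda>k. snd (pre k)) [0..<length K]"
  have "(i, j) \<in> block_indices K"
    unfolding mem_block_indices_iff using pre(1) by (simp add: i_def j_def)
  moreover have "block_pos K i j = g"
  proof (rule nth_equalityI)
    show "length (block_pos K i j) = length g"
      using g len by (simp add: block_pos_def idx_set_def)
    fix k assume "k < length (block_pos K i j)"
    then have k: "k < length K" by (simp add: block_pos_def)
    show "block_pos K i j ! k = g ! k"
      using nth_block_pos[OF k] pre(2)[OF k] by (simp add: i_def j_def k)
  qed
  ultimately show ?thesis
    by (auto intro: rev_image_eqI)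
qed

lemma block_pos_image:
  "blocking K n \<Longrightarrow> (\<lambda>(i, j). block_pos K i j) ` block_indices K = idx_set n"
  using block_pos_in_idx_set block_pos_surj by fastforce

definition block_idx_pairs :: "nat list list \<Rightarrow> (nat list \<times> nat list) list" where
  "block_idx_pairs K =
     concat (map (\<lambda>i. map (Pair i) (idx_list (block_size K i))) (idx_list (map length K)))"

definition block_idx_list :: "nat list list \<Rightarrow> nat list list" where
  "block_idx_list K = map (\<lambda>(i, j). block_pos K i j) (block_idx_pairs K)"

lemma tvec_blk_eq: "tvec_blk X K = vec_of_list (map X (block_idx_list K))"
  unfolding tvec_blk_def block_idx_list_def block_idx_pairs_def list_of_tvec block_eq_comp_block_pos
  by (simp add: idx_list_def map_concat o_def del: upt_Suc)

lemma distinct_concat_map_Pair: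
  "distinct xs \<Longrightarrow> (\<And>x. x \<in> set xs \<Longrightarrow> distinct (f x)) \<Longrightarrow>
   distinct (concat (map (\<lambda>x. map (Pair x) (f x)) xs))"
  by (induction xs) (auto simp: distinct_map inj_on_def)

lemma set_block_idx_pairs: "set (block_idx_pairs K) = block_indices K"
  by (auto simp: block_idx_pairs_def set_idx_list block_indices_def)

lemma distinct_block_idx_list: "distinct (block_idx_list K)"
  unfolding block_idx_list_def distinct_map set_block_idx_pairs
  by (simp add: inj_on_block_pos block_idx_pairs_def distinct_concat_map_Pair distinct_idx_list)

lemma set_block_idx_list: "blocking K n \<Longrightarrow> set (block_idx_list K) = idx_set n"
  unfolding block_idx_list_def set_map set_block_idx_pairs by (rule block_pos_image)

lemma length_sel [simp]: "length (sel v s) = length s"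
  by (simp add: sel_def)

lemma sel_blocking:
  assumes S: "blocking S \<alpha>" and r: "set r \<subseteq> {1..length \<alpha>}"
  shows "blocking (sel S r) (sel \<alpha> r)"
  unfolding blocking_def
proof (intro conjI allI impI)
  show "length (sel S r) = length (sel \<alpha> r)" by simp
  fix k assume "k < length (sel \<alpha> r)"
  then have "r!k \<in> {1..length \<alpha>}" using r nth_mem by fastforce
  then have "r!k - 1 < length \<alpha>" by auto
  then show "\<forall>x\<in>set (sel S r ! k). 0 < x" "sum_list (sel S r ! k) = sel \<alpha> r ! k"
    using S \<open>k < length (sel \<alpha> r)\<close> by (simp_all add: blocking_def sel_def)
qed

section \<open>Permutation matrices\<close>

definition perm_matrix :: "nat \<Rightarrow> (nat \<Rightarrow> nat) \<Rightarrow> real mat" where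
  "perm_matrix N \<sigma> = mat N N (\<lambda>(a, b). if b = \<sigma> a then 1 else 0)"

lemma perm_mat_iff: "perm_mat P N \<longleftrightarrow> (\<exists>\<sigma>. \<sigma> permutes {..<N} \<and> P = perm_matrix N \<sigma>)"
  by (simp add: perm_mat_def perm_matrix_def)

lemma perm_matrix_carrier [simp]: "perm_matrix N \<sigma> \<in> carrier_mat N N"
  by (simp add: perm_matrix_def)

lemma perm_matrix_mult_vec:
  assumes \<sigma>: "\<sigma> permutes {..<N}" and v: "dim_vec v = N"
  shows "perm_matrix N \<sigma> *\<^sub>v v = vec N (\<lambda>a. v $ \<sigma> a)"
proof (rule eq_vecI)
  fix a assume "a < dim_vec (vec N (\<lambda>a. v $ \<sigma> a))"
  then have a: "a < N" by simp
  have "\<sigma> a < N" using permutes_in_image[OF \<sigma>, of a] a by simp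
  have "(perm_matrix N \<sigma> *\<^sub>v v) $ a = (\<Sum>b\<in>{0..<N}. (if b = \<sigma> a then 1 else 0) * v $ b)"
    using a v by (simp add: perm_matrix_def scalar_prod_def)
  also have "\<dots> = v $ \<sigma> a"
    using \<open>\<sigma> a < N\<close> by (simp add: if_distrib[of "\<lambda>c. c * _"] cong: if_cong)
  finally show "(perm_matrix N \<sigma> *\<^sub>v v) $ a = vec N (\<lambda>a. v $ \<sigma> a) $ a"
    using a by simp
qed (simp add: perm_matrix_def)

lemma transpose_perm_matrix_mult:
  assumes \<sigma>: "\<sigma> permutes {..<N}"
  shows "transpose_mat (perm_matrix N \<sigma>) * perm_matrix N \<sigma> = 1\<^sub>m N"
proof (rule eq_matI)
  fix a b assume "a < dim_row (1\<^sub>m N :: real mat)" "b < dim_col (1\<^sub>m N :: real mat)"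
  then have a: "a < N" and b: "b < N" by auto
  have "(transpose_mat (perm_matrix N \<sigma>) * perm_matrix N \<sigma>) $$ (a, b) =
        (\<Sum>c\<in>{..<N}. (\<lambda>d. (if a = d then 1 else 0) * (if b = d then 1 else 0)) (\<sigma> c))"
    using a b by (simp add: perm_matrix_def scalar_prod_def atLeast0LessThan)
  also have "\<dots> = (\<Sum>d\<in>{..<N}. (if a = d then 1 else 0) * (if b = d then 1 else 0 :: real))"
    by (rule sum.reindex_bij_betw[OF permutes_imp_bij[OF \<sigma>]])
  also have "\<dots> = 1\<^sub>m N $$ (a, b)"
    using a b by (simp add: if_distrib[of "\<lambda>c. c * _"] cong: if_cong)
  finally show "(transpose_mat (perm_matrix N \<sigma>) * perm_matrix N \<sigma>) $$ (a, b) = 1\<^sub>m N $$ (a, b)" .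
qed (auto simp: perm_matrix_def)

lemma mult_mat_vec_unit_vec:
  fixes A :: "'a :: semiring_1 mat"
  shows "A \<in> carrier_mat m n \<Longrightarrow> a < m \<Longrightarrow> b < n \<Longrightarrow> (A *\<^sub>v unit_vec n b) $ a = A $$ (a, b)"
  by (simp add: scalar_prod_def if_distrib[of "\<lambda>c. _ * c"] cong: if_cong)

lemma mat_eq_if_mult_vec_eq:
  fixes A B :: "'a :: semiring_1 mat"
  assumes A: "A \<in> carrier_mat m n" and B: "B \<in> carrier_mat m n"
    and eq: "\<And>v. v \<in> carrier_vec n \<Longrightarrow> A *\<^sub>v v = B *\<^sub>v v"
  shows "A = B"
proof (rule eq_matI)
  fix a b assume "a < dim_row B" "b < dim_col B"
  then have "a < m" "b < n" using B by auto
  then have "A $$ (a, b) = (A *\<^sub>v unit_vec n b) $ a"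
    by (simp add: mult_mat_vec_unit_vec[OF A])
  also have "\<dots> = (B *\<^sub>v unit_vec n b) $ a"
    by (simp add: eq)
  also have "\<dots> = B $$ (a, b)"
    using \<open>a < m\<close> \<open>b < n\<close> by (simp add: mult_mat_vec_unit_vec[OF B])
  finally show "A $$ (a, b) = B $$ (a, b)" .
qed (use A B in auto)

lemma mult_conj_orthogonal_cancel:
  fixes R A Q B C :: "'a :: comm_ring_1 mat"
  assumes R: "R \<in> carrier_mat m m" and A: "A \<in> carrier_mat m k"
    and Q: "Q \<in> carrier_mat k k" and QQ: "transpose_mat Q * Q = 1\<^sub>m k"
    and B: "B \<in> carrier_mat k j" and C: "C \<in> carrier_mat j j"
  shows "(R * A * transpose_mat Q) * (Q * B * transpose_mat C) = R * (A * B) * transpose_mat C"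
proof -
  have QT: "transpose_mat Q \<in> carrier_mat k k" and CT: "transpose_mat C \<in> carrier_mat j j"
    using Q C by simp_all
  have RA: "R * A \<in> carrier_mat m k" and AB: "A * B \<in> carrier_mat m j"
    and BC: "B * transpose_mat C \<in> carrier_mat k j"
    using R A B CT by simp_all
  have "(R * A * transpose_mat Q) * (Q * B * transpose_mat C)
      = (R * A) * (transpose_mat Q * (Q * (B * transpose_mat C)))"
    using assoc_mult_mat[OF Q B CT] assoc_mult_mat[OF RA QT mult_carrier_mat[OF Q BC]] by simp
  also have "transpose_mat Q * (Q * (B * transpose_mat C)) = B * transpose_mat C"
    using assoc_mult_mat[OF QT Q BC] QQ left_mult_one_mat[OF BC] by simp
  also have "(R * A) * (B * transpose_mat C) = R * (A * B) * transpose_mat C"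
    using assoc_mult_mat[OF R A BC] assoc_mult_mat[OF A B CT] assoc_mult_mat[OF R AB CT] by simp
  finally show ?thesis .
qed

lemma perm_matrix_reorders_tvec:
  assumes "distinct L" and "set L = idx_set n"
  obtains \<sigma> where "\<sigma> permutes {..<prod_list n}"
    and "\<And>X. perm_matrix (prod_list n) \<sigma> *\<^sub>v tvec X n = vec_of_list (map X L)"
proof
  define N where "N = prod_list n"
  define \<sigma> where "\<sigma> a = (if a < N then ivec (L!a) n - 1 else a)" for a
  have len: "length L = N"
    using distinct_card[OF assms(1)] assms(2) card_idx_set by (simp add: N_def)
  have "bij_betw (\<lambda>a. ivec (L!a) n - 1) {..<N} {..<N}"
  proof -
    have "bij_betw ((!) L) {..<N} (idx_set n)"
      by (rule bij_betw_nth) (use assms len in auto)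
    moreover have "bij_betw (\<lambda>x. x - 1) {1..N} {..<N}"
      by (rule bij_betwI[where g = Suc]) auto
    ultimately show ?thesis
      using bij_betw_trans[OF bij_betw_trans[OF _ bij_betw_ivec]] by (fastforce simp: o_def N_def)
  qed
  then show \<sigma>: "\<sigma> permutes {..<prod_list n}"
    unfolding N_def[symmetric]
    by (rule bij_imp_permutes[OF bij_betw_cong[THEN iffD1, rotated]]) (simp_all add: \<sigma>_def)
  fix X
  show "perm_matrix (prod_list n) \<sigma> *\<^sub>v tvec X n = vec_of_list (map X L)"
  proof (rule eq_vecI)
    fix a assume "a < dim_vec (vec_of_list (map X L))"
    then have a: "a < N" using len by simp
    have "L!a \<in> idx_set n" using a len assms(2) nth_mem by blast
    then have "univec (\<sigma> a + 1) n = L!a"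
      using a bij_betw_apply[OF bij_betw_ivec] by (auto simp: \<sigma>_def univec_ivec Suc_le_eq)
    moreover have "\<sigma> a < N" using permutes_in_image[OF \<sigma>, of a] a by (simp add: N_def)
    ultimately show "(perm_matrix (prod_list n) \<sigma> *\<^sub>v tvec X n) $ a = vec_of_list (map X L) $ a"
      using a len by (simp add: perm_matrix_mult_vec[OF \<sigma>] tvec_def N_def vec_of_list_index)
  qed (simp add: len N_def tvec_def perm_matrix_def)
qed

lemma Pmat_perm_matrix:
  assumes "blocking K n"
  obtains \<sigma> where "\<sigma> permutes {..<prod_list n}" and "Pmat n K = perm_matrix (prod_list n) \<sigma>"
proof -
  obtain \<sigma> where \<sigma>: "\<sigma> permutes {..<prod_list n}"
    and reorder: "\<And>X. perm_matrix (prod_list n) \<sigma> *\<^sub>v tvec X n = tvec_blk X K"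
    unfolding tvec_blk_eq
    by (rule perm_matrix_reorders_tvec[OF distinct_block_idx_list set_block_idx_list[OF assms]])
      blast
  txt \<open>Uniqueness in the description defining Pmat: every vector is the vec of some tensor.\<close>
  have "Pmat n K = perm_matrix (prod_list n) \<sigma>"
    unfolding Pmat_def
  proof (rule the_equality)
    fix P assume P: "perm_mat P (prod_list n) \<and> (\<forall>X. P *\<^sub>v tvec X n = tvec_blk X K)"
    show "P = perm_matrix (prod_list n) \<sigma>"
    proof (rule mat_eq_if_mult_vec_eq)
      show "P \<in> carrier_mat (prod_list n) (prod_list n)"
        using P by (auto simp: perm_mat_iff)
      fix v :: "real vec" assume "v \<in> carrier_vec (prod_list n)"
      then have "v = tvec (\<lambda>j. v $ (ivec j n - 1)) n"
        by (metis carrier_vecD tvec_of_vec)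
      then show "P *\<^sub>v v = perm_matrix (prod_list n) \<sigma> *\<^sub>v v"
        using P reorder by metis
    qed simp
  qed (use \<sigma> reorder in \<open>auto simp: perm_mat_iff\<close>)
  with \<sigma> that show ?thesis by blast
qed

lemma
  assumes "blocking K n"
  shows Pmat_carrier: "Pmat n K \<in> carrier_mat (prod_list n) (prod_list n)"
    and transpose_Pmat_mult: "transpose_mat (Pmat n K) * Pmat n K = 1\<^sub>m (prod_list n)"
proof -
  obtain \<sigma> where "\<sigma> permutes {..<prod_list n}" and "Pmat n K = perm_matrix (prod_list n) \<sigma>"
    by (rule Pmat_perm_matrix[OF assms])
  then show "Pmat n K \<in> carrier_mat (prod_list n) (prod_list n)"
    and "transpose_mat (Pmat n K) * Pmat n K = 1\<^sub>m (prod_list n)"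
    by (simp_all add: transpose_perm_matrix_mult)
qed

section \<open>Unfoldings of a contraction\<close>

lemma tunfold_carrier: "tunfold X n r c \<in> carrier_mat (prod_list (sel n r)) (prod_list (sel n c))"
  by (simp add: tunfold_def)

lemma ptrans_upt: "length j = d \<Longrightarrow> ptrans X [1..<d + 1] j = X j"
proof -
  assume "length j = d"
  moreover have "map (\<lambda>k. i ! (k - 1)) [1..<d + 1] = i" if "length i = d" for i :: "nat list"
    by (rule nth_equalityI) (use that in \<open>auto simp del: upt_Suc\<close>)
  ultimately have "(THE i. length i = length [1..<d + 1] \<and> map (\<lambda>k. i ! (k - 1)) [1..<d + 1] = j) = j"
    by (intro the_equality) (auto simp del: upt_Suc)
  then show ?thesis unfolding ptrans_def by simp
qed

lemma sel_upt: "m + k \<le> length v \<Longrightarrow> sel v [m + 1..<m + k + 1] = take k (drop m v)"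
  by (rule nth_equalityI) (auto simp del: upt_Suc simp: sel_def)

lemma sel_append_upt:
  "sel (xs @ ys) [1..<length xs + 1] = xs"
  "sel (xs @ ys) [length xs + 1..<length xs + length ys + 1] = ys"
  using sel_upt[of 0 "length xs" "xs @ ys"] sel_upt[of "length xs" "length ys" "xs @ ys"] by simp_all

lemma tunfold_contraction:
  fixes F G H :: tensor
  assumes shared: "sel \<alpha> lam = sel \<beta> psi"
    and H: "\<forall>i\<in>idx_set (sel \<alpha> r). \<forall>j\<in>idx_set (sel \<beta> c).
              H (i @ j) = (\<Sum>k\<in>idx_set (sel \<alpha> lam). ptrans F (r @ lam) (i @ k) * ptrans G (psi @ c) (k @ j))"
  shows "tunfold H (sel \<alpha> r @ sel \<beta> c) [1..<length r + 1] [length r + 1..<length r + length c + 1]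
       = tunfold F \<alpha> r lam * tunfold G \<beta> psi c"
    (is "?H = ?F * ?G")
proof (rule eq_matI)
  let ?n = "sel \<alpha> r @ sel \<beta> c"
  have sel_n: "sel ?n [1..<length r + 1] = sel \<alpha> r"
    "sel ?n [length r + 1..<length r + length c + 1] = sel \<beta> c"
    using sel_append_upt[of "sel \<alpha> r" "sel \<beta> c"] by simp_all
  show "dim_row ?H = dim_row (?F * ?G)" "dim_col ?H = dim_col (?F * ?G)"
    unfolding tunfold_def sel_n by (simp_all add: shared)
  fix a b assume "a < dim_row (?F * ?G)" "b < dim_col (?F * ?G)"
  then have a: "a < prod_list (sel \<alpha> r)" and b: "b < prod_list (sel \<beta> c)"
    by (simp_all add: tunfold_def)
  define i where "i = univec (a + 1) (sel \<alpha> r)"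
  define j where "j = univec (b + 1) (sel \<beta> c)"
  have i: "i \<in> idx_set (sel \<alpha> r)" and j: "j \<in> idx_set (sel \<beta> c)"
    using a b by (simp_all add: i_def j_def univec_in_idx_set)
  have "?H $$ (a, b) = ptrans H ([1..<length r + 1] @ [length r + 1..<length r + length c + 1]) (i @ j)"
    unfolding tunfold_def sel_n using a b by (simp add: i_def j_def del: upt_Suc)
  also have "[1..<length r + 1] @ [length r + 1..<length r + length c + 1] = [1..<length r + length c + 1]"
    using upt_add_eq_append[of 1 "length r + 1" "length c"] by (simp add: ac_simps del: upt_Suc)
  also have "ptrans H [1..<length r + length c + 1] (i @ j) = H (i @ j)"
    using i j by (intro ptrans_upt) (simp add: idx_set_def)
  also have "\<dots> = (\<Sum>k\<in>idx_set (sel \<alpha> lam). ptrans F (r @ lam) (i @ k) * ptrans G (psi @ c) (k @ j))"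
    using H i j by blast
  also have "\<dots> = (\<Sum>t<prod_list (sel \<alpha> lam).
      ptrans F (r @ lam) (i @ univec (t + 1) (sel \<alpha> lam)) * ptrans G (psi @ c) (univec (t + 1) (sel \<alpha> lam) @ j))"
    by (rule sum.reindex_bij_betw[OF bij_betw_univec, symmetric])
  also have "\<dots> = (?F * ?G) $$ (a, b)"
    using a b by (simp add: tunfold_def scalar_prod_def atLeast0LessThan i_def j_def shared)
  finally show "?H $$ (a, b) = (?F * ?G) $$ (a, b)" .
qed

lemma blk_unfolding_contraction:
  fixes F G H :: tensor
  assumes shared: "sel \<alpha> lam = sel \<beta> psi"
    and H: "\<forall>i\<in>idx_set (sel \<alpha> r). \<forall>j\<in>idx_set (sel \<beta> c).
              H (i @ j) = (\<Sum>k\<in>idx_set (sel \<alpha> lam). ptrans F (r @ lam) (i @ k) * ptrans G (psi @ c) (k @ j))"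
    and S: "blocking S \<alpha>" and T: "blocking T \<beta>"
    and modes: "set r \<subseteq> {1..length \<alpha>}" "set lam \<subseteq> {1..length \<alpha>}" "set c \<subseteq> {1..length \<beta>}"
    and shared_blocks: "sel S lam = sel T psi"
  shows "blk_unfolding H (sel \<alpha> r @ sel \<beta> c) (sel S r @ sel T c)
           [1..<length r + 1] [length r + 1..<length r + length c + 1]
       = blk_unfolding F \<alpha> S r lam * blk_unfolding G \<beta> T psi c"
proof -
  let ?PR = "Pmat (sel \<alpha> r) (sel S r)" and ?PL = "Pmat (sel \<alpha> lam) (sel S lam)"
    and ?PC = "Pmat (sel \<beta> c) (sel T c)"
  have split: "sel (sel \<alpha> r @ sel \<beta> c) [1..<length r + 1] = sel \<alpha> r"
    "sel (sel \<alpha> r @ sel \<beta> c) [length r + 1..<length r + length c + 1] = sel \<beta> c"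
    "sel (sel S r @ sel T c) [1..<length r + 1] = sel S r"
    "sel (sel S r @ sel T c) [length r + 1..<length r + length c + 1] = sel T c"
    using sel_append_upt[of "sel \<alpha> r" "sel \<beta> c"] sel_append_upt[of "sel S r" "sel T c"] by simp_all
  have R: "blocking (sel S r) (sel \<alpha> r)" and L: "blocking (sel S lam) (sel \<alpha> lam)"
    and C: "blocking (sel T c) (sel \<beta> c)"
    using sel_blocking S T modes by blast+
  have "blk_unfolding H (sel \<alpha> r @ sel \<beta> c) (sel S r @ sel T c)
          [1..<length r + 1] [length r + 1..<length r + length c + 1]
      = ?PR * (tunfold F \<alpha> r lam * tunfold G \<beta> psi c) * transpose_mat ?PC"
    unfolding blk_unfolding_def split tunfold_contraction[OF shared H] ..
  also have "\<dots> = (?PR * tunfold F \<alpha> r lam * transpose_mat ?PL) * (?PL * tunfold G \<beta> psi c * transpose_mat ?PC)"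
    by (rule mult_conj_orthogonal_cancel[symmetric])
      (use Pmat_carrier[OF R] Pmat_carrier[OF L] Pmat_carrier[OF C] transpose_Pmat_mult[OF L]
        tunfold_carrier[of F \<alpha> r lam] tunfold_carrier[of G \<beta> psi c] shared in simp_all)
  also have "\<dots> = blk_unfolding F \<alpha> S r lam * blk_unfolding G \<beta> T psi c"
    unfolding blk_unfolding_def shared shared_blocks ..
  finally show ?thesis .
qed

theorem corollary4p2:
  fixes f g l :: nat
    and \<alpha> \<beta> p q :: "nat list"
    and F G H :: tensor
    and S T :: "nat list list"
  assumes len_\<alpha>: "length \<alpha> = f + l"
    and len_\<beta>: "length \<beta> = g + l"
    and p: "is_perm p (f + l)"
    and q: "is_perm q (g + l)"
    and dims: "sel \<alpha> (drop f p) = sel \<beta> (take l q)"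
    and H: "\<forall>i\<in>idx_set (sel \<alpha> (take f p)). \<forall>j\<in>idx_set (sel \<beta> (drop l q)).
              H (i @ j) = (\<Sum>k\<in>idx_set (sel \<alpha> (drop f p)).
                             ptrans F p (i @ k) * ptrans G q (k @ j))"
    and S: "blocking S \<alpha>"
    and T: "blocking T \<beta>"
    and ST: "\<forall>k<l. S ! (drop f p ! k - 1) = T ! (take l q ! k - 1)"
  shows "blk_unfolding H (sel \<alpha> (take f p) @ sel \<beta> (drop l q))
            (sel S (take f p) @ sel T (drop l q)) [1..<f + 1] [f + 1..<f + g + 1]
       = blk_unfolding F \<alpha> S (take f p) (drop f p) * blk_unfolding G \<beta> T (take l q) (drop l q)"
proof -
  have "length p = f + l" "length q = g + l"
    using p q distinct_card by (force simp: is_perm_def)+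
  then have len: "length (take f p) = f" "length (drop l q) = g"
    by simp_all
  have "set p \<subseteq> {1..length \<alpha>}" "set q \<subseteq> {1..length \<beta>}"
    using p q len_\<alpha> len_\<beta> by (simp_all add: is_perm_def)
  then have modes: "set (take f p) \<subseteq> {1..length \<alpha>}" "set (drop f p) \<subseteq> {1..length \<alpha>}"
    "set (drop l q) \<subseteq> {1..length \<beta>}"
    by (meson order_trans set_take_subset set_drop_subset)+
  have blocks: "sel S (drop f p) = sel T (take l q)"
    using ST \<open>length p = f + l\<close> \<open>length q = g + l\<close> by (intro nth_equalityI) (simp_all add: sel_def)
  show ?thesis
    using blk_unfolding_contraction[OF dims _ S T modes blocks] H
    unfolding len append_take_drop_id by blast
qed

end
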